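(* Let $j\ge 1$, $\lambda\ge 1$, $s\ge 0$ be integers and let $w=w_{j,s,\lambda}$ be the leaf weight sequence defined in the context. Let $g=g_{j,s,\lambda}$ be the sequence defined by $g(n)=w(n)$ for $1\le n\le 3+2s+\lambda j$ and \[ g(n)=g\bigl(n-s-g(n-j)\bigr)+\lambda j\qquad (n>3+2s+\lambda j). \] Then this recursion is well defined for all positive integers $n$ (every argument $n-s-g(n-j)$ lies in $\{1,\dots,n-1\}$), and $g(n)=w(n)$ for every positive integer $n$.
   Context: Fix integers $j\ge1$, $\lambda\ge1$, $s\ge0$. Define a labeled infinite rooted tree $\mathcal K$ as follows. It has "supernodes" $S_0,S_1,S_2,\dots$ with an edge between $S_i$ and $S_{i+1}$ for every $i\ge0$ ($S_0$ is the root). $S_0$ has two further children: the "initial leaf" and a node $N_0$, which is a leaf. For each $i\ge1$, $S_i$ has a child $N_i$ (the "knot node"), and attached to $N_i$ are $\lambda$ chains, each a path of $i\cdot j$ nodes hanging from $N_i$; the last (bottom) node of each chain is a leaf. Each supernode carries $s$ labels and every other node carries exactly one label. The labels are the consecutive positive integers $1,2,3,\dots$, assigned in the following order: initial leaf, $S_0$, $N_0$; then for $i=1,2,3,\dots$: $S_i$ (its $s$ labels), $N_i$, then the nodes of the first chain of $N_i$ from top to bottom, then the second chain, ..., then the $\lambda$-th chain. The initial leaf has weight $1$; every other leaf of $\mathcal K$ (namely $N_0$ and the bottom node of each chain) has weight $j$. The leaf weight sequence $w(n)=w_{j,s,\lambda}(n)$ ($n\ge1$) is the total weight of the leaves of $\mathcal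 K$ whose label is $\le n$. Explicitly, $w(n)=1+j\cdot\#\{\ell\in L:\ell\le n\}$, where $L$ consists of the number $s+2$ together with the numbers $L_{i,c}=s+2+\sum_{l=1}^{i-1}(s+1+\lambda l j)+s+1+c\,i\,j$ for $i\ge1$, $1\le c\le\lambda$. *)

theory Defs
  imports Main
begin

definition Lic :: "nat \<Rightarrow> nat \<Rightarrow> nat \<Rightarrow> nat \<Rightarrow> nat \<Rightarrow> nat" where
  "Lic j s lam i c = s + 2 + (\<Sum>l = 1..i - 1. s + 1 + lam * l * j) + s + 1 + c * i * j"

definition Lset :: "nat \<Rightarrow> nat \<Rightarrow> nat \<Rightarrow> nat set" where
  "Lset j s lam = {s + 2} \<union> {Lic j s lam i c | i c. 1 \<le> i \<and> 1 \<le> c \<and> c \<le> lam}"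

definition wseq :: "nat \<Rightarrow> nat \<Rightarrow> nat \<Rightarrow> nat \<Rightarrow> nat" where
  "wseq j s lam n = 1 + j * card {l \<in> Lset j s lam. l \<le> n}"

end

theory Submission imports Defs begin

(* The weight-j leaves of the tree K have labels
     leaf_label 0 < leaf_label 1 < leaf_label 2 < ...,
   where leaf_label 0 = s + 2 is N_0 and leaf_label q (q >= 1) is the bottom of
   the ((q-1) mod lam + 1)-th chain of knot node N_((q-1) div lam + 1).  Hence
   w(n) = 1 + j*(p+1) whenever leaf_label p <= n < leaf_label (p+1).
   The enumeration is self-similar: leaf_label (q + lam) = leaf_label q + s + 1 + j*(q + lam),
   and consecutive labels differ by at least j, hence by at least 2j beyond the
   first knot node (index p >= lam).  From these facts, for
   n > 3 + 2s + lam*j lying in the window of leaf p = q + lam, the number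
   m = n - s - w(n-j) lies in the window of leaf q; hence 1 <= m < n and
   w(n) = w(m) + lam*j, i.e. w itself satisfies the recursion (lemma
   wseq_recursion). *)

definition leaf_label :: "nat \<Rightarrow> nat \<Rightarrow> nat \<Rightarrow> nat \<Rightarrow> nat" where
  "leaf_label j s lam q =
     (if q = 0 then s + 2 else Lic j s lam ((q - 1) div lam + 1) ((q - 1) mod lam + 1))"

text \<open>Passing from knot node i to knot node i+1 inserts the supernode labels,
  the knot label and the lam chains of length i*j, and lengthens the chain by j.\<close>
lemma Lic_Suc:
  assumes "1 \<le> i"
  shows "Lic j s lam (i + 1) c = Lic j s lam i c + s + 1 + lam * i * j + c * j"
proof -
  obtain k where i: "i = Suc k" using assms by (cases i) auto
  have "(\<Sum>l = 1..i. s + 1 + lam * l * j) = (\<Sum>l = 1..k. s + 1 + lam * l * j) + (s + 1 + lam * i * j)"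
    using i by (simp add: sum.cl_ivl_Suc)
  then show ?thesis unfolding Lic_def using i by (simp add: algebra_simps)
qed

lemma Lic_one: "Lic j s lam (Suc 0) c = 2 * s + 3 + c * j"
  unfolding Lic_def by simp

lemma leaf_label_initial:
  assumes "1 \<le> q" "q \<le> lam"
  shows "leaf_label j s lam q = 2 * s + 3 + q * j"
proof -
  have "(q - 1) div lam = 0" "(q - 1) mod lam = q - 1" using assms by auto
  then show ?thesis using assms unfolding leaf_label_def by (simp add: Lic_one)
qed

lemma leaf_label_shift:
  assumes "1 \<le> lam"
  shows "leaf_label j s lam (q + lam) = leaf_label j s lam q + s + 1 + j * (q + lam)"
proof (cases "q = 0")
  case True
  then show ?thesis using assms leaf_label_initial[of lam lam j s]
    by (simp add: leaf_label_def mult.commute)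
next
  case False
  define i c where "i = (q - 1) div lam + 1" and "c = (q - 1) mod lam + 1"
  have index_shift: "(q + lam - 1) div lam = i" "(q + lam - 1) mod lam = c - 1"
    using False assms unfolding i_def c_def
    by (simp_all add: div_add_self2 mod_add_self2 flip: add_diff_assoc2)
  have "lam * ((q - 1) div lam) + (q - 1) mod lam = q - 1" by (rule mult_div_mod_eq)
  then have "lam * i + c = q + lam"
    using False unfolding i_def c_def by (simp add: algebra_simps)
  then have "lam * i * j + c * j = j * (q + lam)"
    by (metis add_mult_distrib mult.commute)
  moreover have "leaf_label j s lam (q + lam) = Lic j s lam (i + 1) c"
    using False index_shift unfolding leaf_label_def c_def by simp
  moreover have "leaf_label j s lam q = Lic j s lam i c"
    using False unfolding leaf_label_def i_def c_def by simp
  ultimately show ?thesis using Lic_Suc[of i j s lam c] by (simp add: i_def)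
qed

lemma leaf_label_gap:
  assumes "1 \<le> lam"
  shows "leaf_label j s lam q + j \<le> leaf_label j s lam (q + 1)"
proof (induction q rule: less_induct)
  case (less q)
  show ?case
  proof (cases "lam \<le> q")
    case True
    define r where "r = q - lam"
    have q: "q = r + lam" using True unfolding r_def by simp
    have "r < q" using q assms by simp
    then have "leaf_label j s lam r + j \<le> leaf_label j s lam (r + 1)" using less by blast
    moreover have "leaf_label j s lam (q + 1) = leaf_label j s lam (r + 1) + s + 1 + j * (q + 1)"
      using q leaf_label_shift[OF assms, of j s "r + 1"] by (simp add: add.assoc)
    ultimately show ?thesis using q leaf_label_shift[OF assms, of j s r] by simp
  next
    case False
    show ?thesis
    proof (cases "q = 0")
      case True
      then show ?thesis using assms leaf_label_initial[of 1 lam j s] by (simp add: leaf_label_def)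
    next
      case False
      then show ?thesis using \<open>\<not> lam \<le> q\<close> leaf_label_initial[of q lam j s]
          leaf_label_initial[of "q + 1" lam j s] by simp
    qed
  qed
qed

lemma leaf_label_strict_mono:
  assumes "1 \<le> lam" "1 \<le> j"
  shows "strict_mono (leaf_label j s lam)"
  unfolding strict_mono_Suc_iff
proof
  fix q
  have "leaf_label j s lam q + j \<le> leaf_label j s lam (q + 1)" by (rule leaf_label_gap[OF assms(1)])
  then show "leaf_label j s lam q < leaf_label j s lam (Suc q)" using assms(2) by simp
qed

text \<open>Beyond the first knot node the windows between consecutive leaves are at
  least 2j long: by self-similarity they are j longer than the window lam
  indices earlier.\<close>
lemma leaf_label_long_window:
  assumes "1 \<le> lam" "lam \<le> p"
  shows "leaf_label j s lam p + 2 * j \<le> leaf_label j s lam (p + 1)"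
proof -
  define q where "q = p - lam"
  have p: "p = q + lam" "p + 1 = (q + 1) + lam" using assms(2) unfolding q_def by simp_all
  show ?thesis
    using leaf_label_gap[OF assms(1), of j s q] p
      leaf_label_shift[OF assms(1), of j s q] leaf_label_shift[OF assms(1), of j s "q + 1"]
    by simp
qed

lemma Lset_eq_range:
  assumes "1 \<le> lam"
  shows "Lset j s lam = range (leaf_label j s lam)"
proof
  show "Lset j s lam \<subseteq> range (leaf_label j s lam)"
  proof
    fix x assume "x \<in> Lset j s lam"
    then consider "x = s + 2" | i c where "x = Lic j s lam i c" "1 \<le> i" "1 \<le> c" "c \<le> lam"
      unfolding Lset_def by blast
    then show "x \<in> range (leaf_label j s lam)"
    proof cases
      case 1
      then show ?thesis by (metis leaf_label_def rangeI)
    next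
      case 2
      define q where "q = lam * (i - 1) + c"
      have "(q - 1) div lam = i - 1" "(q - 1) mod lam = c - 1"
        using 2 assms unfolding q_def by (simp_all add: div_add1_eq flip: add_diff_assoc)
      then have "leaf_label j s lam q = x" using 2 unfolding leaf_label_def q_def by auto
      then show ?thesis by (metis rangeI)
    qed
  qed
next
  show "range (leaf_label j s lam) \<subseteq> Lset j s lam"
  proof
    fix x assume "x \<in> range (leaf_label j s lam)"
    then obtain q where x: "x = leaf_label j s lam q" by blast
    have "(q - 1) mod lam + 1 \<le> lam" using assms by (simp add: Suc_leI)
    then show "x \<in> Lset j s lam"
      using x unfolding leaf_label_def Lset_def by (cases "q = 0") auto
  qed
qed

lemma strict_mono_window:
  fixes f :: "nat \<Rightarrow> nat"
  assumes "strict_mono f" "f a \<le> n"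
  obtains p where "a \<le> p" "f p \<le> n" "n < f (p + 1)"
proof -
  have "n < f (Suc n)" using strict_mono_imp_increasing[OF assms(1), of "Suc n"] by simp
  then have ex: "\<exists>k. n < f k" by blast
  define k where "k = (LEAST k. n < f k)"
  have above: "n < f k" unfolding k_def using ex by (rule LeastI_ex)
  have below: "\<not> n < f k'" if "k' < k" for k' using that unfolding k_def by (rule not_less_Least)
  have "a < k"
  proof (rule ccontr)
    assume "\<not> a < k"
    then have "f k \<le> f a" using strict_mono_less_eq[OF assms(1)] by simp
    then show False using above assms(2) by simp
  qed
  then have "a \<le> k - 1" "f (k - 1) \<le> n" "n < f (k - 1 + 1)"
    using above below[of "k - 1"] by simp_all
  then show ?thesis by (rule that)
qed

lemma wseq_on_window:
  assumes "1 \<le> lam" "1 \<le> j"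
    and "leaf_label j s lam p \<le> n" "n < leaf_label j s lam (p + 1)"
  shows "wseq j s lam n = 1 + j * (p + 1)"
proof -
  have mono: "strict_mono (leaf_label j s lam)" using leaf_label_strict_mono assms by blast
  have "q \<le> p \<longleftrightarrow> leaf_label j s lam q \<le> n" for q
    using assms(3,4) strict_mono_less_eq[OF mono, of q p] strict_mono_less[OF mono, of q "p + 1"]
    by auto
  then have "{l \<in> Lset j s lam. l \<le> n} = leaf_label j s lam ` {..p}"
    unfolding Lset_eq_range[OF assms(1)] by auto
  moreover have "card (leaf_label j s lam ` {..p}) = p + 1"
    using card_image[OF strict_mono_imp_inj_on[OF mono]] by simp
  ultimately show ?thesis unfolding wseq_def by simp
qed

text \<open>Looking back by j from a point of the window of leaf p (p >= lam) lands in
  the window of leaf p or of leaf p-1; in either case w(n-j) is confined as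
  follows (the second bound uses that the window of leaf p is 2j long).\<close>
lemma wseq_lag_bounds:
  assumes "1 \<le> lam" "1 \<le> j" "lam \<le> p"
    and "leaf_label j s lam p \<le> n" "n < leaf_label j s lam (p + 1)"
  shows "leaf_label j s lam p + wseq j s lam (n - j) \<le> n + 1 + j * p"
    and "n + 1 + j * (p + 1) < leaf_label j s lam (p + 1) + wseq j s lam (n - j)"
proof -
  have p: "1 \<le> p" using assms(1,3) by simp
  have gap: "leaf_label j s lam (p - 1) + j \<le> leaf_label j s lam p"
    using leaf_label_gap[OF assms(1), of j s "p - 1"] p by simp
  consider (same) "leaf_label j s lam p + j \<le> n" | (previous) "n < leaf_label j s lam p + j"
    by linarith
  then have "leaf_label j s lam p + wseq j s lam (n - j) \<le> n + 1 + j * p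
           \<and> n + 1 + j * (p + 1) < leaf_label j s lam (p + 1) + wseq j s lam (n - j)"
  proof cases
    case same
    then have "wseq j s lam (n - j) = 1 + j * (p + 1)"
      using wseq_on_window[OF assms(1,2)] assms(5) by simp
    then show ?thesis using same assms(5) by simp
  next
    case previous
    then have "leaf_label j s lam (p - 1) \<le> n - j" "n - j < leaf_label j s lam (p - 1 + 1)"
      using p assms(4) gap by simp_all
    moreover have "j * (p - 1 + 1) = j * p" using p by simp
    ultimately have "wseq j s lam (n - j) = 1 + j * p"
      using wseq_on_window[OF assms(1,2)] by metis
    then show ?thesis
      using previous assms(4) leaf_label_long_window[OF assms(1,3), of j s] by simp
  qed
  then show "leaf_label j s lam p + wseq j s lam (n - j) \<le> n + 1 + j * p"
    and "n + 1 + j * (p + 1) < leaf_label j s lam (p + 1) + wseq j s lam (n - j)" by auto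
qed

text \<open>For n beyond the initial segment, m = n - s - w(n-j) lies in the window of
  leaf p - lam when n lies in that of leaf p; this yields the recursion for w.\<close>
lemma wseq_recursion:
  assumes "1 \<le> j" "1 \<le> lam" "3 + 2 * s + lam * j < n"
  defines "m \<equiv> n - s - wseq j s lam (n - j)"
  shows "s + wseq j s lam (n - j) < n" and "1 \<le> m" and "m < n"
    and "wseq j s lam n = wseq j s lam m + lam * j"
proof -
  let ?leaf = "leaf_label j s lam"
  have mono: "strict_mono ?leaf" using leaf_label_strict_mono assms(1,2) by blast
  have "?leaf lam \<le> n" using leaf_label_initial[of lam lam j s] assms by (simp add: mult.commute)
  then obtain p where p: "lam \<le> p" "?leaf p \<le> n" "n < ?leaf (p + 1)"
    using strict_mono_window[OF mono] by blast
  define q where "q = p - lam"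
  have shift: "?leaf p = ?leaf q + s + 1 + j * p" "?leaf (p + 1) = ?leaf (q + 1) + s + 1 + j * (p + 1)"
    using leaf_label_shift[OF assms(2), of j s q] leaf_label_shift[OF assms(2), of j s "q + 1"] p(1)
    unfolding q_def by simp_all
  have lag: "?leaf p + wseq j s lam (n - j) \<le> n + 1 + j * p"
    "n + 1 + j * (p + 1) < ?leaf (p + 1) + wseq j s lam (n - j)"
    using wseq_lag_bounds[OF assms(2,1) p] by auto
  have window: "?leaf q \<le> m" "m < ?leaf (q + 1)"
    using lag shift unfolding m_def by linarith+
  have "s + 2 \<le> ?leaf q" using strict_mono_less_eq[OF mono, of 0 q] by (simp add: leaf_label_def)
  then show "s + wseq j s lam (n - j) < n" and "1 \<le> m"
    using window lag(1) shift(1) unfolding m_def by linarith+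
  show "m < n" using \<open>s + wseq j s lam (n - j) < n\<close> unfolding m_def wseq_def by simp
  show "wseq j s lam n = wseq j s lam m + lam * j"
  proof -
    have "p = q + lam" using p(1) unfolding q_def by simp
    then show ?thesis
      using wseq_on_window[OF assms(2,1) p(2,3)] wseq_on_window[OF assms(2,1) window]
      by (simp add: algebra_simps)
  qed
qed

theorem theorem2p1:
  fixes j s lam :: nat and g :: "nat \<Rightarrow> int"
  assumes hj: "1 \<le> j" and hlam: "1 \<le> lam"
    and base: "\<And>n. 1 \<le> n \<Longrightarrow> n \<le> 3 + 2 * s + lam * j \<Longrightarrow> g n = int (wseq j s lam n)"
    and recur: "\<And>n. n > 3 + 2 * s + lam * j \<Longrightarrow>
        1 \<le> int n - int s - g (n - j) \<Longrightarrow> int n - int s - g (n - j) \<le> int n - 1 \<Longrightarrow>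
        g n = g (nat (int n - int s - g (n - j))) + int (lam * j)"
  shows "(\<forall>n > 3 + 2 * s + lam * j.
            1 \<le> int n - int s - g (n - j) \<and> int n - int s - g (n - j) \<le> int n - 1)
       \<and> (\<forall>n \<ge> 1. g n = int (wseq j s lam n))"
proof -
  have argument: "int n - int s - g (n - j) = int (n - s - wseq j s lam (n - j))"
    if "3 + 2 * s + lam * j < n" "g (n - j) = int (wseq j s lam (n - j))" for n
    using that wseq_recursion(1)[OF hj hlam that(1)] by simp
  have lookback: "1 \<le> n - j" "n - j < n" if "3 + 2 * s + lam * j < n" for n
  proof -
    have "j \<le> lam * j" using hlam by simp
    then show "1 \<le> n - j" "n - j < n" using that hj by linarith+
  qed
  have agree: "g n = int (wseq j s lam n)" if "1 \<le> n" for n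
    using that
  proof (induction n rule: less_induct)
    case (less n)
    show ?case
    proof (cases "n \<le> 3 + 2 * s + lam * j")
      case True
      then show ?thesis using base less.prems by blast
    next
      case False
      then have n: "3 + 2 * s + lam * j < n" by simp
      define m where "m = n - s - wseq j s lam (n - j)"
      note m = wseq_recursion[OF hj hlam n, folded m_def]
      have "int n - int s - g (n - j) = int m"
        using argument[OF n] less.IH lookback[OF n] unfolding m_def by blast
      then have "g n = g m + int (lam * j)" using recur[OF n] m(2,3) by simp
      then show ?thesis using less.IH[OF m(3,2)] m(4) by simp
    qed
  qed
  have "1 \<le> int n - int s - g (n - j) \<and> int n - int s - g (n - j) \<le> int n - 1"
    if n: "3 + 2 * s + lam * j < n" for n
  proof -
    define m where "m = n - s - wseq j s lam (n - j)"
    note m = wseq_recursion[OF hj hlam n, folded m_def]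
    have "int n - int s - g (n - j) = int m"
      using argument[OF n] agree lookback(1)[OF n] unfolding m_def by blast
    then show ?thesis using m(2,3) by simp
  qed
  then show ?thesis using agree by blast
qed

end
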